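(* Let $T$ be a rooted binary phylogenetic tree with root $\rho$ of out-degree 2 and children $\rho_1,\rho_2$, and let $\dot T_1,\dot T_2$ be as defined in the context. Under the $N_r$ model (any $r\ge2$), $$RA_\varphi(T)=\tfrac12\big(RA_\varphi(\dot T_1)+RA_\varphi(\dot T_2)\big).$$
   Context: A rooted binary phylogenetic tree is a finite tree with a distinguished root vertex $\rho$, all edges directed away from $\rho$, in which $\rho$ has out-degree 2 or 1 (in the latter case the edge at $\rho$ is the stem edge), and every other vertex has in-degree 1 and out-degree 0 or 2; out-degree-0 vertices are leaves. Under the Neyman $r$-state model $N_r$ ($r\ge2$) on a state set of size $r$, each edge $e$ carries a substitution probability $p_e\in[0,\frac{r-1}{r}]$; given the root state, states propagate independently along edges: for an edge $(u,v)$, $F(v)=F(u)$ with probability $1-p_e$, and otherwise $F(v)$ is uniform among the $r-1$ other states; $f$ is the restriction of $F$ to the leaves. The coin-toss method $\varphi$: leaves get their states $f(x)$; proceeding towards the root, a vertex whose two children have equal states gets that state, otherwise one of the two states chosen by an independent fair coin toss; a vertex with a single child gets its child's state. $RA_\varphi$ is the probability that the state assigned to the root equals the true root state. For $i=1,2$, $T_i$ is the maximal subtree of $T$ rooted at $\rho_i$, and $\dot T_i$ is the tree consisting of $T_i$ together with the edge $(\rho,\rho_i)$ (with its substitution probability from $T$) as stem edge, rooted at $\rho$. *)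

theory Defs
  imports "HOL-Probability.Probability"
begin

text \<open>Subtrees below a non-root vertex: a leaf, or an internal vertex with exactly two
 child edges, each labelled by its substitution probability.\<close>
datatype btree = Leaf | Node real btree real btree

text \<open>Rooted binary phylogenetic trees: the root has out-degree 2 (Root2) or
 out-degree 1 (Stem: the root together with its stem edge).\<close>
datatype rtree = Root2 real btree real btree | Stem real btree

definition nr_edge :: "nat \<Rightarrow> real \<Rightarrow> nat \<Rightarrow> nat pmf" where
  "nr_edge r p s = do { b \<leftarrow> bernoulli_pmf p;
                        if b then pmf_of_set ({0..<r} - {s}) else return_pmf s }"

definition coin :: "nat \<Rightarrow> nat \<Rightarrow> nat pmf" where
  "coin a b = (if a = b then return_pmf a
               else do { c \<leftarrow> bernoulli_pmf (1/2); return_pmf (if c then a else b) })"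

text \<open>Distribution of the state assigned by the coin-toss method to a vertex,
 given the true state s of that vertex (leaf states evolve along edges under N_r,
 independently on different edges; coin tosses are independent).\<close>
fun ct :: "nat \<Rightarrow> btree \<Rightarrow> nat \<Rightarrow> nat pmf" where
  "ct r Leaf s = return_pmf s"
| "ct r (Node p1 t1 p2 t2) s = do {
      s1 \<leftarrow> nr_edge r p1 s; s2 \<leftarrow> nr_edge r p2 s;
      a \<leftarrow> ct r t1 s1; b \<leftarrow> ct r t2 s2; coin a b }"

fun ct_root :: "nat \<Rightarrow> rtree \<Rightarrow> nat \<Rightarrow> nat pmf" where
  "ct_root r (Root2 p1 t1 p2 t2) s = ct r (Node p1 t1 p2 t2) s"
| "ct_root r (Stem p t) s = do { s1 \<leftarrow> nr_edge r p s; ct r t s1 }"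

text \<open>Root state uniform on the r states (stationary distribution of N_r).\<close>
definition RA :: "nat \<Rightarrow> rtree \<Rightarrow> real" where
  "RA r T = measure_pmf.prob
     (do { s \<leftarrow> pmf_of_set {0..<r}; a \<leftarrow> ct_root r T s; return_pmf (a = s) }) {True}"

fun valid_bt :: "nat \<Rightarrow> btree \<Rightarrow> bool" where
  "valid_bt r Leaf = True"
| "valid_bt r (Node p1 t1 p2 t2) =
     (0 \<le> p1 \<and> p1 \<le> (real r - 1) / real r \<and> 0 \<le> p2 \<and> p2 \<le> (real r - 1) / real r
      \<and> valid_bt r t1 \<and> valid_bt r t2)"

fun valid_rt :: "nat \<Rightarrow> rtree \<Rightarrow> bool" where
  "valid_rt r (Root2 p1 t1 p2 t2) = valid_bt r (Node p1 t1 p2 t2)"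
| "valid_rt r (Stem p t) = (0 \<le> p \<and> p \<le> (real r - 1) / real r \<and> valid_bt r t)"

end

theory Submission
  imports Defs
begin

text \<open>The coin toss at the root is independent of everything below it, so the
 estimate at the root is the estimate obtained along one of the two root edges, chosen by a
 fair coin. Each such estimate is exactly the one produced for the stemmed subtree, hence the
 reconstruction accuracy is the average of the two. No constraint on r or on the substitution
 probabilities is needed.\<close>

lemma coin_eq_bind_bernoulli:
  "coin a b = do { c \<leftarrow> bernoulli_pmf (1/2); return_pmf (if c then a else b) }"
  by (cases "a = b") (simp_all add: coin_def cong: if_cong)

lemma bind_bind_coin:
  "do { a \<leftarrow> X; b \<leftarrow> Y; coin a b } = do { c \<leftarrow> bernoulli_pmf (1/2); if c then X else Y }"
proof -
  have "do { a \<leftarrow> X; b \<leftarrow> Y; coin a b } =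
        do { c \<leftarrow> bernoulli_pmf (1/2); a \<leftarrow> X; b \<leftarrow> Y; return_pmf (if c then a else b) }"
    unfolding coin_eq_bind_bernoulli
    by (simp add: bind_commute_pmf[of Y "bernoulli_pmf (1/2)"]
                  bind_commute_pmf[of X "bernoulli_pmf (1/2)"])
  also have "\<dots> = do { c \<leftarrow> bernoulli_pmf (1/2); if c then X else Y }"
    by (intro bind_pmf_cong refl) (simp add: bind_return_pmf' bind_pmf_const)
  finally show ?thesis .
qed

lemma ct_Node_eq_coin_mixture:
  "ct r (Node p1 t1 p2 t2) s =
     do { c \<leftarrow> bernoulli_pmf (1/2);
          if c then ct_root r (Stem p1 t1) s else ct_root r (Stem p2 t2) s }"
proof -
  have "ct r (Node p1 t1 p2 t2) s =
        do { a \<leftarrow> ct_root r (Stem p1 t1) s; b \<leftarrow> ct_root r (Stem p2 t2) s; coin a b }"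
    by (simp add: bind_assoc_pmf bind_commute_pmf[of "nr_edge r p2 s"])
  then show ?thesis
    by (simp only: bind_bind_coin)
qed

lemma pmf_bind_bernoulli_half:
  "pmf (bernoulli_pmf (1/2) \<bind> f) x = (pmf (f True) x + pmf (f False) x) / 2"
  by (simp add: pmf_bind)

theorem theorem3:
  fixes r :: nat and p1 p2 :: real and t1 t2 :: btree
  assumes "r \<ge> 2" and "valid_rt r (Root2 p1 t1 p2 t2)"
  shows "RA r (Root2 p1 t1 p2 t2) = (RA r (Stem p1 t1) + RA r (Stem p2 t2)) / 2"
proof -
  define trial where "trial T = do { s \<leftarrow> pmf_of_set {0..<r}; a \<leftarrow> ct_root r T s; return_pmf (a = s) }"
    for T
  have RA_eq: "RA r T = pmf (trial T) True" for T
    by (simp add: RA_def trial_def measure_pmf_single)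
  have "trial (Root2 p1 t1 p2 t2) =
        do { c \<leftarrow> bernoulli_pmf (1/2); if c then trial (Stem p1 t1) else trial (Stem p2 t2) }"
    unfolding trial_def ct_root.simps(1) ct_Node_eq_coin_mixture bind_assoc_pmf
    by (subst bind_commute_pmf) (intro bind_pmf_cong refl, simp)
  then show ?thesis
    by (simp add: RA_eq pmf_bind_bernoulli_half)
qed

end
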